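(* Let $X$ be a nonempty set and $S$ a regular semigroup. Then every one-to-one mapping $\phi':X\to E(S)$ can be extended to a skeleton mapping $\phi:\Gamma(X)\to E(S^1)$ (i.e. $x\phi=x\phi'$ for all $x\in X$).
   Context: Let $1$ be a symbol not in $X$. Elements of height $\ge 2$ are triples $g=(g^l,g^c,g^r)$; $\Gamma_0(X)=\{1\}$, $\Gamma_1(X)=X$, each $x\in X$ identified with $(1,x,1)$; for $i\ge 2$, $\Gamma_i(X)$ is the set of triples $g\in\Gamma_{i-1}(X)\times\Gamma_{i-2}(X)\times\Gamma_{i-1}(X)$ with $g^l\neq g^r$ and $g^c\in\{(g^l)^l,(g^l)^r\}\cap\{(g^r)^l,(g^r)^r\}$; $\Gamma(X)=\bigcup_{i\ge0}\Gamma_i(X)$. $S^1$ is $S$ with an identity adjoined if necessary; $E(\cdot)$ is the set of idempotents. For idempotents $e,f$ of a semigroup $R$, $S(e,f)=\{h\in E(R): fh=h=he,\ ehf=ef\}$. A skeleton mapping is a mapping $\phi:\Gamma(X)\to E(S^1)$ such that (i) $\phi|_X$ is one-to-one with $X\phi\subseteq E(S)$; (ii) $(1\phi)(g\phi)=g\phi=(g\phi)(1\phi)$ for all $g\in X$; (iii) $g\phi\in S\big((g^r\phi)(g^c\phi),(g^c\phi)(g^l\phi)\big)$ (in $S^1$) for all $g\in\Gamma_i(X)$, $i\ge2$. *)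

theory Defs
  imports Main
begin

text \<open>Elements of Gamma(X): the symbol 1 (One), generators x (Gen x, identified with (1,x,1)),
  and triples (g^l, g^c, g^r) (Tri).\<close>
datatype 'x gam = One | Gen 'x | Tri "'x gam" "'x gam" "'x gam"

fun gl :: "'x gam \<Rightarrow> 'x gam" where
  "gl One = One" | "gl (Gen x) = One" | "gl (Tri l c r) = l"
fun gc :: "'x gam \<Rightarrow> 'x gam" where
  "gc One = One" | "gc (Gen x) = Gen x" | "gc (Tri l c r) = c"
fun gr :: "'x gam \<Rightarrow> 'x gam" where
  "gr One = One" | "gr (Gen x) = One" | "gr (Tri l c r) = r"

fun Gam :: "'x set \<Rightarrow> nat \<Rightarrow> 'x gam set" where
  "Gam X 0 = {One}"
| "Gam X (Suc 0) = Gen ` X"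
| "Gam X (Suc (Suc i)) =
     {Tri l c r | l c r. l \<in> Gam X (Suc i) \<and> c \<in> Gam X i \<and> r \<in> Gam X (Suc i) \<and> l \<noteq> r
        \<and> c \<in> {gl l, gr l} \<inter> {gl r, gr r}}"

definition GamAll :: "'x set \<Rightarrow> 'x gam set" where
  "GamAll X = (\<Union>i. Gam X i)"

definition regular_semigroup :: "'a::semigroup_mult itself \<Rightarrow> bool" where
  "regular_semigroup _ \<longleftrightarrow> (\<forall>a::'a. \<exists>x. a * x * a = a)"

definition idems :: "'a::semigroup_mult set" where
  "idems = {e. e * e = e}"

text \<open>S^1 is modelled inside 'a option, None being the adjoined identity; if S already
  has an identity, S^1 = S (the image of Some).\<close>
definition has_identity :: "'a::semigroup_mult itself \<Rightarrow> bool" where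
  "has_identity _ \<longleftrightarrow> (\<exists>e::'a. \<forall>s. e * s = s \<and> s * e = s)"

fun mult1 :: "'a::semigroup_mult option \<Rightarrow> 'a option \<Rightarrow> 'a option" where
  "mult1 None u = u"
| "mult1 (Some a) None = Some a"
| "mult1 (Some a) (Some b) = Some (a * b)"

definition S1 :: "'a::semigroup_mult option set" where
  "S1 = (if has_identity TYPE('a) then range Some else UNIV)"

definition idems1 :: "'a::semigroup_mult option set" where
  "idems1 = {u \<in> S1. mult1 u u = u}"

definition sandwich1 :: "'a::semigroup_mult option \<Rightarrow> 'a option \<Rightarrow> 'a option set" where
  "sandwich1 e f = {h \<in> idems1. mult1 f h = h \<and> mult1 h e = h
      \<and> mult1 (mult1 e h) f = mult1 e f}"

definition skeleton_mapping :: "'x set \<Rightarrow> ('x gam \<Rightarrow> 'a::semigroup_mult option) \<Rightarrow> bool" where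
  "skeleton_mapping X \<phi> \<longleftrightarrow>
     (\<forall>g \<in> GamAll X. \<phi> g \<in> idems1)
   \<and> inj_on (\<lambda>x. \<phi> (Gen x)) X
   \<and> (\<forall>x\<in>X. \<phi> (Gen x) \<in> Some ` idems)
   \<and> (\<forall>x\<in>X. mult1 (\<phi> One) (\<phi> (Gen x)) = \<phi> (Gen x) \<and> mult1 (\<phi> (Gen x)) (\<phi> One) = \<phi> (Gen x))
   \<and> (\<forall>i\<ge>2. \<forall>g \<in> Gam X i.
        \<phi> g \<in> sandwich1 (mult1 (\<phi> (gr g)) (\<phi> (gc g))) (mult1 (\<phi> (gc g)) (\<phi> (gl g))))"

end

theory Submission
  imports Defs
begin

text \<open>In a regular semigroup, if x is an inverse of e f then f x e lies in the sandwich set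
  S(e,f). So \<phi> can be defined by recursion on Gamma(X): 1 goes to the identity of S^1, x to x\<phi>',
  and a triple g to such an element of the sandwich set that condition (iii) prescribes for g.
  By induction on the height, g\<phi> is idempotent and (g\<phi>)(d\<phi>)(g\<phi>) = g\<phi> for d = g^l and d = g^r.
  Since the centre of a triple is a side of both of its sides, this makes (g^r\<phi>)(g^c\<phi>) and
  (g^c\<phi>)(g^l\<phi>) idempotent at the next height, which is what the recursion needs to continue.\<close>

instantiation option :: (semigroup_mult) monoid_mult
begin

definition one_option_def: "1 = None"

definition times_option_def: "(*) = mult1"

instance
proof
  fix a b c :: "'a option"
  show "a * b * c = a * (b * c)"
    by (cases a; cases b; cases c) (simp_all add: times_option_def mult.assoc)
  show "1 * a = a" "a * 1 = a"
    by (cases a; simp add: one_option_def times_option_def)+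
qed

end

lemma mult1_eq_times: "mult1 u v = u * v"
  by (simp add: times_option_def)

definition inverses :: "'a::semigroup_mult \<Rightarrow> 'a set" where
  "inverses a = {x. a * x * a = a \<and> x * a * x = x}"

definition some_inverse :: "'a::semigroup_mult \<Rightarrow> 'a" where
  "some_inverse a = (SOME x. x \<in> inverses a)"

lemma inverses_nonempty:
  assumes "regular_semigroup TYPE('a::semigroup_mult)"
  shows "inverses (a::'a) \<noteq> {}"
proof -
  obtain y :: 'a where y: "a * y * a = a"
    using assms unfolding regular_semigroup_def by blast
  have y_left: "a * (y * a) = a"
    using y by (simp add: mult.assoc)
  have y_absorb: "a * (y * (a * z)) = a * z" for z
    using y by (simp flip: mult.assoc)
  have "a * (y * a * y) * a = a" "(y * a * y) * a * (y * a * y) = y * a * y"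
    by (simp_all add: mult.assoc y_left y_absorb)
  then show ?thesis
    unfolding inverses_def by blast
qed

lemma some_inverse_mem:
  "regular_semigroup TYPE('a::semigroup_mult) \<Longrightarrow> some_inverse (a::'a) \<in> inverses a"
  unfolding some_inverse_def using inverses_nonempty by (metis all_not_in_conv someI)

definition sandwich_set :: "'a::semigroup_mult \<Rightarrow> 'a \<Rightarrow> 'a set" where
  "sandwich_set e f = {h \<in> idems. f * h = h \<and> h * e = h \<and> e * h * f = e * f}"

definition sandwich_element :: "'a::semigroup_mult \<Rightarrow> 'a \<Rightarrow> 'a" where
  "sandwich_element e f = f * some_inverse (e * f) * e"

lemma inverse_sandwich_mem:
  assumes x: "x \<in> inverses (e * f)" and e: "e \<in> idems" and f: "f \<in> idems"
  shows "f * x * e \<in> sandwich_set e f"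
proof -
  have "(f * x * e) * (f * x * e) = f * (x * (e * f) * x) * e"
    by (simp add: mult.assoc)
  then have idem: "(f * x * e) * (f * x * e) = f * x * e"
    using x by (simp add: inverses_def)
  have "f * (f * x * e) = (f * f) * x * e" "(f * x * e) * e = f * x * (e * e)"
    by (simp_all add: mult.assoc)
  then have absorb: "f * (f * x * e) = f * x * e" "(f * x * e) * e = f * x * e"
    using e f by (simp_all add: idems_def)
  have "e * (f * x * e) * f = e * f * x * (e * f)"
    by (simp add: mult.assoc)
  then have "e * (f * x * e) * f = e * f"
    using x by (simp add: inverses_def)
  with idem absorb show ?thesis
    by (simp add: sandwich_set_def idems_def)
qed

lemma inverse_sandwich_absorbs:
  assumes "x \<in> inverses (e * f)" and "e * u * f = e * f"
  shows "(f * x * e) * u * (f * x * e) = f * x * e"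
proof -
  have "(f * x * e) * u * (f * x * e) = f * x * (e * u * f) * x * e"
    by (simp add: mult.assoc)
  also have "\<dots> = f * (x * (e * f) * x) * e"
    using assms(2) by (simp add: mult.assoc)
  finally show ?thesis
    using assms(1) by (simp add: inverses_def)
qed

lemma sandwich_element_triple:
  fixes l c r :: "'a::semigroup_mult"
  assumes reg: "regular_semigroup TYPE('a)"
    and c: "c * c = c" and l: "l * c * l = l" and r: "r * c * r = r"
    and h: "h = sandwich_element (r * c) (c * l)"
  shows "h \<in> sandwich_set (r * c) (c * l)" and "h * l * h = h" and "h * r * h = h"
proof -
  let ?x = "some_inverse (r * c * (c * l))"
  have x: "?x \<in> inverses (r * c * (c * l))"
    using reg by (rule some_inverse_mem)
  have h_eq: "h = c * l * ?x * (r * c)"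
    using h by (simp add: sandwich_element_def)
  have "(r * c) * (r * c) = (r * c * r) * c" "(c * l) * (c * l) = c * (l * c * l)"
    by (simp_all add: mult.assoc)
  then have "r * c \<in> idems" "c * l \<in> idems"
    using l r by (simp_all add: idems_def)
  with x show "h \<in> sandwich_set (r * c) (c * l)"
    unfolding h_eq by (rule inverse_sandwich_mem)
  have "r * c * (c * l) = r * (c * c) * l"
    by (simp add: mult.assoc)
  then have rc_cl: "r * c * (c * l) = r * c * l"
    using c by simp
  have "r * c * l * (c * l) = r * c * (l * c * l)"
    by (simp add: mult.assoc)
  then have "r * c * l * (c * l) = r * c * (c * l)"
    using l rc_cl by simp
  with x show "h * l * h = h"
    unfolding h_eq by (rule inverse_sandwich_absorbs)
  have "r * c * r * (c * l) = (r * c * r) * c * l"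
    by (simp add: mult.assoc)
  then have "r * c * r * (c * l) = r * c * (c * l)"
    using r rc_cl by simp
  with x show "h * r * h = h"
    unfolding h_eq by (rule inverse_sandwich_absorbs)
qed

lemma regular_semigroup_option:
  assumes "regular_semigroup TYPE('a::semigroup_mult)"
  shows "regular_semigroup TYPE('a option)"
  unfolding regular_semigroup_def
proof
  fix u :: "'a option"
  show "\<exists>v. u * v * u = u"
  proof (cases u)
    case None
    then show ?thesis by (intro exI[of _ None]) (simp add: times_option_def)
  next
    case (Some a)
    obtain y where "a * y * a = a"
      using assms unfolding regular_semigroup_def by blast
    then show ?thesis
      using Some by (intro exI[of _ "Some y"]) (simp add: times_option_def)
  qed
qed

lemma Some_times_Some [simp]: "Some a * Some b = Some (a * b)"
  by (simp add: times_option_def)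

lemma S1_mult_left: "u \<in> S1 \<Longrightarrow> u * v \<in> S1"
  by (cases u; cases v) (auto simp: S1_def times_option_def)

lemma Some_S1: "Some a \<in> S1"
  by (simp add: S1_def)

text \<open>If S already has an identity e, then S^1 = S and its identity is Some e rather than None.\<close>

definition unit1 :: "'a::semigroup_mult option" where
  "unit1 = (if has_identity TYPE('a) then Some (SOME e::'a. \<forall>s. e * s = s \<and> s * e = s) else None)"

lemma unit1_S1: "unit1 \<in> S1"
  by (simp add: unit1_def S1_def)

lemma unit1_neutral:
  assumes "(v::'a::semigroup_mult option) \<in> S1"
  shows "unit1 * v = v" and "v * unit1 = v"
proof -
  have "unit1 * v = v \<and> v * unit1 = v"
  proof (cases "has_identity TYPE('a)")
    case True
    then have e: "\<forall>s. (SOME e::'a. \<forall>s. e * s = s \<and> s * e = s) * s = s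
        \<and> s * (SOME e::'a. \<forall>s. e * s = s \<and> s * e = s) = s"
      unfolding has_identity_def by (rule someI_ex)
    obtain s where "v = Some s"
      using True assms by (auto simp: S1_def)
    then show ?thesis
      using True e by (simp add: unit1_def times_option_def)
  next
    case False
    then show ?thesis
      by (simp add: unit1_def flip: one_option_def)
  qed
  then show "unit1 * v = v" "v * unit1 = v" by simp_all
qed

lemma idems1_eq: "idems1 = S1 \<inter> idems"
  by (auto simp: idems1_def idems_def mult1_eq_times)

lemma sandwich1_eq: "sandwich1 e f = S1 \<inter> sandwich_set e f"
  by (auto simp: sandwich1_def sandwich_set_def idems1_eq mult1_eq_times)

fun canonical_skeleton :: "('x \<Rightarrow> 'a::semigroup_mult) \<Rightarrow> 'x gam \<Rightarrow> 'a option" where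
  "canonical_skeleton f One = unit1"
| "canonical_skeleton f (Gen x) = Some (f x)"
| "canonical_skeleton f (Tri l c r) =
     sandwich_element (canonical_skeleton f r * canonical_skeleton f c)
       (canonical_skeleton f c * canonical_skeleton f l)"

definition sides_absorbed :: "('x gam \<Rightarrow> 'a::semigroup_mult option) \<Rightarrow> 'x gam \<Rightarrow> bool" where
  "sides_absorbed \<phi> g \<longleftrightarrow> \<phi> g \<in> idems1
     \<and> \<phi> g * \<phi> (gl g) * \<phi> g = \<phi> g \<and> \<phi> g * \<phi> (gr g) * \<phi> g = \<phi> g"

lemma canonical_skeleton_Tri:
  fixes f :: "'x \<Rightarrow> 'a::semigroup_mult"
  defines "\<phi> \<equiv> canonical_skeleton f"
  assumes reg: "regular_semigroup TYPE('a)"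
    and sides: "sides_absorbed \<phi> l" "sides_absorbed \<phi> c" "sides_absorbed \<phi> r"
    and centre: "c \<in> {gl l, gr l}" "c \<in> {gl r, gr r}"
  shows "\<phi> (Tri l c r) \<in> sandwich1 (\<phi> r * \<phi> c) (\<phi> c * \<phi> l)"
    and "sides_absorbed \<phi> (Tri l c r)"
proof -
  have c: "\<phi> c \<in> S1" "\<phi> c * \<phi> c = \<phi> c"
    using sides(2) by (simp_all add: sides_absorbed_def idems1_eq idems_def)
  have "\<phi> l * \<phi> c * \<phi> l = \<phi> l" "\<phi> r * \<phi> c * \<phi> r = \<phi> r"
    using sides(1,3) centre by (auto simp: sides_absorbed_def)
  note triple = sandwich_element_triple[OF regular_semigroup_option[OF reg] c(2) this]
  have "\<phi> (Tri l c r)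
      = \<phi> c * (\<phi> l * some_inverse (\<phi> r * \<phi> c * (\<phi> c * \<phi> l)) * (\<phi> r * \<phi> c))"
    by (simp add: \<phi>_def sandwich_element_def mult.assoc)
  then have "\<phi> (Tri l c r) \<in> S1"
    using c(1) by (simp add: S1_mult_left)
  then show "\<phi> (Tri l c r) \<in> sandwich1 (\<phi> r * \<phi> c) (\<phi> c * \<phi> l)"
    and "sides_absorbed \<phi> (Tri l c r)"
    using triple by (simp_all add: \<phi>_def sandwich1_eq sides_absorbed_def idems1_eq sandwich_set_def)
qed

lemma canonical_skeleton_sides_absorbed:
  fixes f :: "'x \<Rightarrow> 'a::semigroup_mult"
  assumes reg: "regular_semigroup TYPE('a)" and f: "f ` X \<subseteq> idems" and g: "g \<in> Gam X i"
  shows "sides_absorbed (canonical_skeleton f) g"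
  using f g
proof (induction X i arbitrary: g rule: Gam.induct)
  case (1 X)
  then show ?case
    by (simp add: sides_absorbed_def idems1_eq idems_def unit1_S1 unit1_neutral[OF unit1_S1])
next
  case (2 X)
  then obtain x where "g = Gen x" and "f x * f x = f x"
    by (auto simp: idems_def)
  then show ?case
    by (simp add: sides_absorbed_def idems1_eq idems_def Some_S1 unit1_neutral[OF Some_S1])
next
  case (3 X i)
  then obtain l c r where g: "g = Tri l c r" and parts: "l \<in> Gam X (Suc i)" "c \<in> Gam X i"
    "r \<in> Gam X (Suc i)" and centre: "c \<in> {gl l, gr l}" "c \<in> {gl r, gr r}"
    by auto
  show ?case
    unfolding g using "3.IH"[OF "3.prems"(1)] parts centre
    by (blast intro: canonical_skeleton_Tri(2)[OF reg])
qed

lemma canonical_skeleton_in_sandwich1: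
  fixes f :: "'x \<Rightarrow> 'a::semigroup_mult"
  defines "\<phi> \<equiv> canonical_skeleton f"
  assumes reg: "regular_semigroup TYPE('a)" and f: "f ` X \<subseteq> idems"
    and g: "g \<in> Gam X i" and i: "2 \<le> i"
  shows "\<phi> g \<in> sandwich1 (mult1 (\<phi> (gr g)) (\<phi> (gc g))) (mult1 (\<phi> (gc g)) (\<phi> (gl g)))"
proof -
  obtain j where "i = Suc (Suc j)"
    using i by (metis add_2_eq_Suc le_Suc_ex)
  with g obtain l c r where g: "g = Tri l c r" and parts: "l \<in> Gam X (Suc j)" "c \<in> Gam X j"
    "r \<in> Gam X (Suc j)" and centre: "c \<in> {gl l, gr l}" "c \<in> {gl r, gr r}"
    by auto
  have "\<phi> (Tri l c r) \<in> sandwich1 (\<phi> r * \<phi> c) (\<phi> c * \<phi> l)"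
    unfolding \<phi>_def using canonical_skeleton_sides_absorbed[OF reg f] parts centre
    by (blast intro: canonical_skeleton_Tri(1)[OF reg])
  then show ?thesis
    by (simp add: g mult1_eq_times)
qed

theorem lemma5p3:
  fixes X :: "'x set" and \<phi>' :: "'x \<Rightarrow> 'a::semigroup_mult"
  assumes "X \<noteq> {}"
    and "regular_semigroup TYPE('a)"
    and "inj_on \<phi>' X"
    and "\<phi>' ` X \<subseteq> idems"
  shows "\<exists>\<phi> :: 'x gam \<Rightarrow> 'a option.
           skeleton_mapping X \<phi> \<and> (\<forall>x\<in>X. \<phi> (Gen x) = Some (\<phi>' x))"
proof (intro exI conjI)
  show "skeleton_mapping X (canonical_skeleton \<phi>')"
    unfolding skeleton_mapping_def
    using assms(3,4) canonical_skeleton_sides_absorbed[OF assms(2,4)]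
      canonical_skeleton_in_sandwich1[OF assms(2,4)] unit1_neutral[OF Some_S1]
    by (auto simp: GamAll_def sides_absorbed_def inj_on_def mult1_eq_times)
  show "\<forall>x\<in>X. canonical_skeleton \<phi>' (Gen x) = Some (\<phi>' x)"
    by simp
qed

end
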